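(* Let $S$ be a closed type of system $\mathcal F$ not containing the type constant $O$. Then $S$ is an output type if and only if: for every normal $\lambda$-term $t$ and all types $A_1,\dots,A_r$ that end with $O$, if $x_1:A_1,\dots,x_r:A_r\vdash_{\mathcal F} t : S$, then $x_i\notin Fv(t)$ for all $1\le i\le r$.
   Context: $\lambda$-terms are those of the untyped $\lambda$-calculus; $Fv(t)$ the free variables; normal means without $\beta$-redex. Types of system $\mathcal F$ are built from type variables and type constants (atomic, not quantifiable; $O$ is one) with $\rightarrow$ and $\forall$; only proper types (in every $\forall XA$, $X$ occurs free in $A$). Typing: (ax) $\Gamma \vdash x_i : A_i$ for $x_i:A_i\in\Gamma$; ($\rightarrow_i$) from $\Gamma, x:B \vdash t : C$ infer $\Gamma \vdash \lambda x t : B \rightarrow C$; ($\rightarrow_e$) from $\Gamma \vdash u : B\rightarrow C$, $\Gamma \vdash v : B$ infer $\Gamma \vdash (u)v : C$; ($\forall_i$) from $\Gamma \vdash t : A$, $X$ not free in $\Gamma$, infer $\Gamma \vdash t : \forall X A$; ($\forall_e$) from $\Gamma \vdash t : \forall X A$ infer $\Gamma \vdash t : A[C/X]$. An output type is a closed type $S$ not containing $O$ such that for every normal $t$ and variable $\alpha$, $\alpha:O\vdash_{\mathcal F}t:S$ implies $\alpha\notin Fv(t)$. For $K$ a type variable or constant, "$A$ ends with $K$" is defined inductively: $K$ ends with $K$; if $A$ ends with $K$ then $B\rightarrow A$ ends with $K$ for every type $B$; if $A$ ends with $K$ then $\forall X A$ ends with $K$ for every type variable $X\neq K$. *)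

theory Defs
  imports Main
begin

datatype lterm = Var nat | Lam nat lterm | App lterm lterm

fun Fv :: "lterm \<Rightarrow> nat set" where
  "Fv (Var x) = {x}"
| "Fv (Lam x t) = Fv t - {x}"
| "Fv (App u v) = Fv u \<union> Fv v"

fun normal :: "lterm \<Rightarrow> bool" where
  "normal (Var x) = True"
| "normal (Lam x t) = normal t"
| "normal (App u v) = ((\<forall>y s. u \<noteq> Lam y s) \<and> normal u \<and> normal v)"

section \<open>Types of system F with type constants (de Bruijn indices for type variables)\<close>

datatype ty = TVar nat | TConst nat | Arr ty ty | All ty

definition TO :: ty where "TO = TConst 0"

fun tfv :: "ty \<Rightarrow> nat set" where
  "tfv (TVar n) = {n}"
| "tfv (TConst c) = {}"
| "tfv (Arr A B) = tfv A \<union> tfv B"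
| "tfv (All A) = {n - 1 | n. n \<in> tfv A \<and> n > 0}"

fun consts_of :: "ty \<Rightarrow> nat set" where
  "consts_of (TVar n) = {}"
| "consts_of (TConst c) = {c}"
| "consts_of (Arr A B) = consts_of A \<union> consts_of B"
| "consts_of (All A) = consts_of A"

definition closed_ty :: "ty \<Rightarrow> bool" where
  "closed_ty A \<longleftrightarrow> tfv A = {}"

definition contains_O :: "ty \<Rightarrow> bool" where
  "contains_O A \<longleftrightarrow> 0 \<in> consts_of A"

fun proper :: "ty \<Rightarrow> bool" where
  "proper (TVar n) = True"
| "proper (TConst c) = True"
| "proper (Arr A B) = (proper A \<and> proper B)"
| "proper (All A) = (proper A \<and> 0 \<in> tfv A)"

fun tshift :: "nat \<Rightarrow> nat \<Rightarrow> ty \<Rightarrow> ty" where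
  "tshift d c (TVar n) = (if n < c then TVar n else TVar (n + d))"
| "tshift d c (TConst k) = TConst k"
| "tshift d c (Arr A B) = Arr (tshift d c A) (tshift d c B)"
| "tshift d c (All A) = All (tshift d (Suc c) A)"

text \<open>instantiation of the variable with index k by C (removing that binder level):
  tinst 0 C A is A[C/X] where All A = \<forall>X A\<close>
fun tinst :: "nat \<Rightarrow> ty \<Rightarrow> ty \<Rightarrow> ty" where
  "tinst k C (TVar n) = (if n < k then TVar n else if n = k then tshift k 0 C else TVar (n - 1))"
| "tinst k C (TConst c) = TConst c"
| "tinst k C (Arr A B) = Arr (tinst k C A) (tinst k C B)"
| "tinst k C (All A) = All (tinst (Suc k) C A)"

inductive typing :: "(nat \<times> ty) list \<Rightarrow> lterm \<Rightarrow> ty \<Rightarrow> bool" where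
  ax: "map_of \<Gamma> x = Some A \<Longrightarrow> proper A \<Longrightarrow> typing \<Gamma> (Var x) A"
| arr_i: "typing ((x, B) # \<Gamma>) t C \<Longrightarrow> proper B \<Longrightarrow> typing \<Gamma> (Lam x t) (Arr B C)"
| arr_e: "typing \<Gamma> u (Arr B C) \<Longrightarrow> typing \<Gamma> v B \<Longrightarrow> typing \<Gamma> (App u v) C"
| all_i: "typing (map (\<lambda>(x, B). (x, tshift 1 0 B)) \<Gamma>) t A \<Longrightarrow> 0 \<in> tfv A
          \<Longrightarrow> typing \<Gamma> t (All A)"
| all_e: "typing \<Gamma> t (All A) \<Longrightarrow> proper C \<Longrightarrow> typing \<Gamma> t (tinst 0 C A)"

definition output_type :: "ty \<Rightarrow> bool" where
  "output_type S \<longleftrightarrow> closed_ty S \<and> proper S \<and> \<not> contains_O S \<and>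
     (\<forall>t \<alpha>. normal t \<longrightarrow> typing [(\<alpha>, TO)] t S \<longrightarrow> \<alpha> \<notin> Fv t)"

text \<open>ends_with K A for K a type variable or constant; under a binder the
  index of a variable K is lifted, so the bound variable is never K\<close>
fun ends_with :: "ty \<Rightarrow> ty \<Rightarrow> bool" where
  "ends_with K (TVar n) = (K = TVar n)"
| "ends_with K (TConst c) = (K = TConst c)"
| "ends_with K (Arr B A) = ends_with K A"
| "ends_with K (All A) = ends_with (tshift 1 0 K) A"

end

theory Submission
  imports Defs
begin

text \<open>Replace every maximal application \<open>x\<^sub>i u\<^sub>1 \<dots> u\<^sub>n\<close> in \<open>t\<close> by \<open>\<lambda>y\<^sub>n\<^sub>+\<^sub>1 \<dots> y\<^sub>k. \<alpha>\<close>, where \<open>k\<close>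
  is the number of arrows of \<open>A\<^sub>i\<close>. Since \<open>A\<^sub>i\<close> ends with \<open>O\<close>, the type of the
  application is again an \<open>O\<close>-ending type with \<open>k - n\<close> arrows, and that term has it under
  \<open>\<alpha> : O\<close>. The result is still normal (no new head is an abstraction), is typed by \<open>S\<close>
  in the context \<open>\<alpha> : O\<close>, and contains \<open>\<alpha>\<close> free as soon as some \<open>x\<^sub>i\<close> was free in \<open>t\<close>.
  The converse is the instance \<open>r = 1\<close>, \<open>A\<^sub>1 = O\<close>.\<close>

fun arity :: "ty \<Rightarrow> nat" where
  "arity (Arr B A) = Suc (arity A)"
| "arity (All A) = arity A"
| "arity _ = 0"

fun head_var :: "lterm \<Rightarrow> nat option" where
  "head_var (Var x) = Some x"
| "head_var (App u v) = head_var u"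
| "head_var (Lam x t) = None"

fun num_args :: "lterm \<Rightarrow> nat" where
  "num_args (App u v) = Suc (num_args u)"
| "num_args _ = 0"

fun all_vars :: "lterm \<Rightarrow> nat set" where
  "all_vars (Var x) = {x}"
| "all_vars (Lam x t) = insert x (all_vars t)"
| "all_vars (App u v) = all_vars u \<union> all_vars v"

lemma finite_all_vars: "finite (all_vars t)"
  by (induction t) auto

text \<open>\<open>lam_const a n\<close> is \<open>\<lambda>y\<^sub>1 \<dots> y\<^sub>n. a\<close>; every binder is named \<open>Suc a \<noteq> a\<close>, so \<open>a\<close> stays free.\<close>

fun lam_const :: "nat \<Rightarrow> nat \<Rightarrow> lterm" where
  "lam_const a 0 = Var a"
| "lam_const a (Suc n) = Lam (Suc a) (lam_const a n)"

lemma normal_lam_const: "normal (lam_const a n)"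
  by (induction n) auto

lemma Fv_lam_const: "a \<in> Fv (lam_const a n)"
  by (induction n) auto

lemma arity_tshift: "arity (tshift d k A) = arity A"
  by (induction A arbitrary: k) auto

lemma ends_with_const_tshift:
  "ends_with (TConst c) A \<Longrightarrow> ends_with (TConst c) (tshift d k A)"
  by (induction A arbitrary: k) auto

lemma ends_with_const_tinst:
  "ends_with (TConst c) A \<Longrightarrow> ends_with (TConst c) (tinst k C A)"
  by (induction A arbitrary: k) auto

lemma arity_tinst_ends_with_const:
  "ends_with (TConst c) A \<Longrightarrow> arity (tinst k C A) = arity A"
  by (induction A arbitrary: k) auto

lemma tfv_tshift_below: "n \<in> tfv A \<Longrightarrow> n < c \<Longrightarrow> n \<in> tfv (tshift d c A)"
proof (induction A arbitrary: n c)
  case (All A)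
  then obtain m where "m \<in> tfv A" "m > 0" "n = m - 1" by auto
  with All.IH[of m "Suc c"] All.prems show ?case by force
qed auto

lemma tfv_tinst_below: "n \<in> tfv A \<Longrightarrow> n < k \<Longrightarrow> n \<in> tfv (tinst k C A)"
proof (induction A arbitrary: n k)
  case (All A)
  then obtain m where "m \<in> tfv A" "m > 0" "n = m - 1" by auto
  with All.IH[of m "Suc k"] All.prems show ?case by force
qed auto

lemma proper_tshift: "proper A \<Longrightarrow> proper (tshift d c A)"
  by (induction A arbitrary: c) (auto intro: tfv_tshift_below)

lemma proper_tinst: "proper A \<Longrightarrow> proper C \<Longrightarrow> proper (tinst k C A)"
  by (induction A arbitrary: k) (auto intro: tfv_tinst_below proper_tshift)

lemma map_of_map_snd:
  "map_of (map (\<lambda>(x, B). (x, g B)) \<Gamma>) z = map_option g (map_of \<Gamma> z)"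
  by (induction \<Gamma>) auto

lemma typing_lam_const:
  assumes "ends_with (TConst c) C" "proper C" "map_of \<Gamma> a = Some (TConst c)"
  shows "typing \<Gamma> (lam_const a (arity C)) C"
  using assms
proof (induction C arbitrary: \<Gamma>)
  case (TConst c')
  then show ?case by (auto intro: typing.ax)
next
  case (Arr B A)
  then have "typing ((Suc a, B) # \<Gamma>) (lam_const a (arity A)) A" by auto
  with Arr.prems show ?case by (auto intro: typing.arr_i)
next
  case (All A)
  then have "typing (map (\<lambda>(x, B). (x, tshift 1 0 B)) \<Gamma>) (lam_const a (arity A)) A"
    by (auto simp: map_of_map_snd)
  with All.prems show ?case by (auto intro: typing.all_i)
qed simp

lemma typing_head_ends_with_const:
  assumes "typing \<Gamma> t C" "head_var t = Some x" "map_of \<Gamma> x = Some A"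
    "ends_with (TConst c) A" "proper A"
  shows "proper C \<and> ends_with (TConst c) C \<and> num_args t \<le> arity A
    \<and> arity C = arity A - num_args t"
  using assms
proof (induction arbitrary: A rule: typing.induct)
  case (arr_e \<Gamma> u B C v)
  then have "proper (Arr B C) \<and> ends_with (TConst c) (Arr B C) \<and> num_args u \<le> arity A \<and>
     arity (Arr B C) = arity A - num_args u" by auto
  then show ?case by auto
next
  case (all_i \<Gamma> t A')
  have "map_of (map (\<lambda>(x, B). (x, tshift 1 0 B)) \<Gamma>) x = Some (tshift 1 0 A)"
    using all_i.prems by (simp add: map_of_map_snd)
  with all_i.prems all_i.IH[of "tshift 1 0 A"]
  have "proper A' \<and> ends_with (TConst c) A' \<and> num_args t \<le> arity A
      \<and> arity A' = arity A - num_args t"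
    by (auto simp: proper_tshift ends_with_const_tshift arity_tshift)
  with all_i.hyps show ?case by auto
next
  case (all_e \<Gamma> t A' C)
  then have "proper (All A') \<and> ends_with (TConst c) (All A') \<and> num_args t \<le> arity A
      \<and> arity (All A') = arity A - num_args t"
    by blast
  with all_e.hyps show ?case
    by (auto simp: proper_tinst ends_with_const_tinst arity_tinst_ends_with_const)
qed auto

text \<open>\<open>f\<close> maps each variable to be replaced to the arity of its type. An application
  headed by such a variable is replaced as a whole, which is why collapsing creates no redex.\<close>

definition head_arity :: "(nat \<Rightarrow> nat option) \<Rightarrow> lterm \<Rightarrow> nat option" where
  "head_arity f t = (case head_var t of Some x \<Rightarrow> f x | None \<Rightarrow> None)"

fun collapse :: "(nat \<Rightarrow> nat option) \<Rightarrow> nat \<Rightarrow> lterm \<Rightarrow> lterm" where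
  "collapse f a (Var x) = (case f x of Some k \<Rightarrow> lam_const a k | None \<Rightarrow> Var x)"
| "collapse f a (Lam x t) = Lam x (collapse (f(x := None)) a t)"
| "collapse f a (App u v) =
    (case head_arity f u of
       Some k \<Rightarrow> lam_const a (k - Suc (num_args u))
     | None \<Rightarrow> App (collapse f a u) (collapse f a v))"

definition collapse_ctxt ::
    "nat \<Rightarrow> (nat \<Rightarrow> nat option) \<Rightarrow> nat \<Rightarrow> (nat \<times> ty) list \<Rightarrow> (nat \<times> ty) list \<Rightarrow> bool" where
  "collapse_ctxt c f a \<Gamma> \<Gamma>' \<longleftrightarrow> map_of \<Gamma>' a = Some (TConst c)
     \<and> (\<forall>z. z \<noteq> a \<longrightarrow> f z = None \<longrightarrow> map_of \<Gamma>' z = map_of \<Gamma> z)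
     \<and> (\<forall>z k. f z = Some k \<longrightarrow>
          (\<exists>A. map_of \<Gamma> z = Some A \<and> proper A \<and> ends_with (TConst c) A \<and> arity A = k))"

lemma collapse_ctxt_tshift:
  assumes "collapse_ctxt c f a \<Gamma> \<Gamma>'"
  shows "collapse_ctxt c f a (map (\<lambda>(x, B). (x, tshift 1 0 B)) \<Gamma>)
    (map (\<lambda>(x, B). (x, tshift 1 0 B)) \<Gamma>')"
  using assms unfolding collapse_ctxt_def
  by (fastforce simp: map_of_map_snd proper_tshift ends_with_const_tshift arity_tshift)

lemma typing_collapse:
  "typing \<Gamma> t C \<Longrightarrow> collapse_ctxt c f a \<Gamma> \<Gamma>' \<Longrightarrow> a \<notin> all_vars t \<Longrightarrow>
    typing \<Gamma>' (collapse f a t) C"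
proof (induction arbitrary: f \<Gamma>' rule: typing.induct)
  case (ax \<Gamma> x A)
  show ?case
  proof (cases "f x")
    case None
    with ax show ?thesis by (auto simp: collapse_ctxt_def intro: typing.ax)
  next
    case (Some k)
    with ax obtain A' where "map_of \<Gamma> x = Some A'" "ends_with (TConst c) A'" "arity A' = k"
      unfolding collapse_ctxt_def by blast
    with Some ax show ?thesis by (auto simp: collapse_ctxt_def intro: typing_lam_const)
  qed
next
  case (arr_i x B \<Gamma> t C)
  have "collapse_ctxt c (f(x := None)) a ((x, B) # \<Gamma>) ((x, B) # \<Gamma>')"
    using arr_i.prems unfolding collapse_ctxt_def by auto
  with arr_i show ?case by (auto intro: typing.arr_i)
next
  case (arr_e \<Gamma> u B C v)
  show ?case
  proof (cases "head_arity f u")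
    case None
    with arr_e show ?thesis by (auto intro!: typing.arr_e)
  next
    case (Some k)
    then obtain x where x: "head_var u = Some x" "f x = Some k"
      unfolding head_arity_def by (auto split: option.splits)
    with arr_e.prems obtain A where A: "map_of \<Gamma> x = Some A" "proper A"
      "ends_with (TConst c) A" "arity A = k"
      unfolding collapse_ctxt_def by blast
    have "typing \<Gamma> (App u v) C" using arr_e.hyps by (rule typing.arr_e)
    from typing_head_ends_with_const[OF this _ A(1,3,2)] x A(4)
    have "proper C" "ends_with (TConst c) C" "arity C = k - Suc (num_args u)" by auto
    moreover have "map_of \<Gamma>' a = Some (TConst c)"
      using arr_e.prems unfolding collapse_ctxt_def by blast
    ultimately show ?thesis
      using Some typing_lam_const[of c C \<Gamma>' a] by simp
  qed
next
  case (all_i \<Gamma> t A)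
  with collapse_ctxt_tshift show ?case by (auto intro: typing.all_i)
next
  case (all_e \<Gamma> t A C)
  then show ?case by (auto intro: typing.all_e)
qed

lemma collapse_not_Lam:
  "head_arity f t = None \<Longrightarrow> \<forall>y s. t \<noteq> Lam y s \<Longrightarrow> \<forall>y s. collapse f a t \<noteq> Lam y s"
  by (cases t) (auto simp: head_arity_def split: option.splits)

lemma normal_collapse: "normal t \<Longrightarrow> normal (collapse f a t)"
proof (induction t arbitrary: f)
  case (App u v)
  then show ?case
    using collapse_not_Lam[of f u a]
    by (cases "head_arity f u") (auto simp: normal_lam_const)
qed (auto simp: normal_lam_const split: option.splits)

lemma Fv_collapse:
  "x \<in> Fv t \<Longrightarrow> f x \<noteq> None \<Longrightarrow> a \<notin> all_vars t \<Longrightarrow> a \<in> Fv (collapse f a t)"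
proof (induction t arbitrary: f)
  case (App u v)
  then show ?case by (cases "head_arity f u") (auto simp: Fv_lam_const)
qed (auto simp: Fv_lam_const split: option.splits)

lemma collapse_to_single_var:
  assumes "normal t" "typing \<Gamma> t C" "\<forall>(x, A) \<in> set \<Gamma>. proper A \<and> ends_with (TConst c) A"
    "x \<in> fst ` set \<Gamma>" "x \<in> Fv t"
  obtains t' a where "normal t'" "typing [(a, TConst c)] t' C" "a \<in> Fv t'"
proof -
  obtain a where a: "a \<notin> all_vars t"
    using ex_new_if_finite[OF infinite_UNIV_nat finite_all_vars] by blast
  define f where "f = (\<lambda>z. map_option arity (map_of \<Gamma> z))"
  have "collapse_ctxt c f a \<Gamma> [(a, TConst c)]"
    unfolding collapse_ctxt_def f_def using assms(3)
    by (auto dest!: map_of_SomeD simp: map_option_case split: option.splits)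
  moreover have "f x \<noteq> None"
    using assms(4) unfolding f_def by (auto simp: map_of_eq_None_iff)
  ultimately show thesis
    using that normal_collapse[OF assms(1)] typing_collapse[OF assms(2) _ a]
      Fv_collapse[OF assms(5) _ a]
    by blast
qed

theorem theorem2p1p1:
  assumes "closed_ty S" and "proper S" and "\<not> contains_O S"
  shows "output_type S \<longleftrightarrow>
    (\<forall>t \<Gamma>. normal t \<longrightarrow> distinct (map fst \<Gamma>) \<longrightarrow>
       (\<forall>(x, A) \<in> set \<Gamma>. proper A \<and> ends_with TO A) \<longrightarrow>
       typing \<Gamma> t S \<longrightarrow> (\<forall>x \<in> fst ` set \<Gamma>. x \<notin> Fv t))"
    (is "_ \<longleftrightarrow> ?free_vars_unused")
proof
  assume "output_type S"
  then have "\<alpha> \<notin> Fv t" if "normal t" "typing [(\<alpha>, TO)] t S" for t \<alpha>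
    using that unfolding output_type_def by blast
  then show ?free_vars_unused
    unfolding TO_def by (blast elim: collapse_to_single_var)
next
  assume ?free_vars_unused
  then have "\<alpha> \<notin> Fv t" if "normal t" "typing [(\<alpha>, TO)] t S" for t \<alpha>
    using that by (force simp: TO_def)
  with assms show "output_type S"
    unfolding output_type_def by blast
qed

end
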